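(* In the setting below, for each $v\in\mathbb{R}^d$ and $n\in\mathbb{N}_0$, $$\min_{j=1,\dots,N}\langle x_j(t_{2n+2}),v\rangle\le\langle x_i(t),v\rangle\le\max_{j=1,\dots,N}\langle x_j(t_{2n+2}),v\rangle$$ for all $t\in[t_{2n+1},t_{2n+2}]$ and $i=1,\dots,N$.
   Context: Setting: $N\ge2$; $\psi:\mathbb{R}^d\times\mathbb{R}^d\to\mathbb{R}$ positive, bounded, continuous, $K:=\|\psi\|_\infty$; $\{t_n\}_{n\in\mathbb{N}_0}$ increasing, nonnegative, $t_0=0$, $t_n\to\infty$; $\alpha(0)=1$, $\alpha=1$ on $(t_{2n},t_{2n+1})$, $\alpha=-1$ on $[t_{2n+1},t_{2n+2}]$; $\{x_i\}$ solves $x_i'(t)=\frac1{N-1}\sum_{j\ne i}\alpha(t)\psi(x_i(t),x_j(t))(x_j(t)-x_i(t))$, $t>0$, $x_i(0)=x_i^0\in\mathbb{R}^d$ (continuous, $C^1$ on each $(t_n,t_{n+1})$). Standing assumptions: $t_{2n+2}-t_{2n+1}<\frac{\ln 2}{K}$ for all $n$; $\sum_{p\ge0}\ln\frac{e^{K(t_{2p+2}-t_{2p+1})}}{2-e^{K(t_{2p+2}-t_{2p+1})}}<\infty$; $\sum_{p\ge0}\ln\max\{1-e^{-K(t_{2p+1}-t_{2p})},1-\frac{\psi_0}{K}(1-e^{-K(t_{2p+1}-t_{2p})})\}=-\infty$, with $\psi_0=\min_{|y|,|z|\le M^0}\psi(y,z)$, $M^0=e^{K\sum_{p}(t_{2p+2}-t_{2p+1})}\max_i|x_i^0|$.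 *)

theory Defs
  imports "HOL-Analysis.Analysis"
begin

definition sw_alpha :: "(nat \<Rightarrow> real) \<Rightarrow> real \<Rightarrow> real" where
  "sw_alpha t s = (if \<exists>n. t (2*n+1) \<le> s \<and> s \<le> t (2*n+2) then -1 else 1)"

definition psiK :: "('a \<Rightarrow> 'a \<Rightarrow> real) \<Rightarrow> real" where
  "psiK psi = (SUP p. \<bar>psi (fst p) (snd p)\<bar>)"

definition M0 :: "real \<Rightarrow> (nat \<Rightarrow> real) \<Rightarrow> nat \<Rightarrow> (nat \<Rightarrow> 'a::real_normed_vector) \<Rightarrow> real" where
  "M0 K t N x0 = exp (K * (\<Sum>p. t (2*p+2) - t (2*p+1))) * (MAX i\<in>{..<N}. norm (x0 i))"

definition psi0 :: "('a::real_normed_vector \<Rightarrow> 'a \<Rightarrow> real) \<Rightarrow> real \<Rightarrow> real" where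
  "psi0 psi M = Inf {psi y z | y z. norm y \<le> M \<and> norm z \<le> M}"

end

theory Submission
  imports Defs
begin

text \<open>During a backward phase \<open>\<alpha> = -1\<close> and the interaction is repulsive, so whichever agent
  currently has the largest projection onto a direction \<open>v\<close> can only increase that projection.
  Hence the maximal projection is nondecreasing on the phase and bounded by its value at the end;
  applied to \<open>-v\<close> this gives the lower bound by the minimum. As the maximum of the projections
  need not be differentiable, its monotonicity is obtained by a last-crossing argument against
  the strictly decreasing barrier \<open>M + \<epsilon> (1 + b - s)\<close>.\<close>

lemma family_le_zero_if_increasing_at_max:
  fixes g :: "'i \<Rightarrow> real \<Rightarrow> real"
  assumes "finite I"
    and cont: "\<And>k. k \<in> I \<Longrightarrow> continuous_on {a..b} (g k)"
    and incr_at_max: "\<And>k s. k \<in> I \<Longrightarrow> s \<in> {a<..<b} \<Longrightarrow> (\<forall>l\<in>I. g l s \<le> g k s) \<Longrightarrow>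
                 \<exists>D>0. (g k has_real_derivative D) (at s)"
    and end_neg: "\<And>k. k \<in> I \<Longrightarrow> g k b < 0"
    and i: "i \<in> I" and s0: "s0 \<in> {a..b}"
  shows "g i s0 \<le> 0"
proof (rule ccontr)
  assume "\<not> g i s0 \<le> 0"
  hence gi_pos: "g i s0 > 0" by simp
  define Z where "Z = (\<Union>k\<in>I. {s \<in> {s0..b}. 0 \<le> g k s})"
  have "closed Z"
    unfolding Z_def using \<open>finite I\<close> s0
    by (intro closed_UN ballI continuous_on_closed_Collect_le continuous_intros)
       (auto intro: continuous_on_subset[OF cont])
  moreover have "s0 \<in> Z"
    unfolding Z_def using i gi_pos s0 by (auto intro!: bexI[of _ i])
  moreover have "bdd_above Z"
    unfolding Z_def by (auto intro: bdd_aboveI[where M = b])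
  ultimately have "Sup Z \<in> Z"
    using closed_contains_Sup by blast
  then obtain j where j: "j \<in> I" "0 \<le> g j (Sup Z)" and Sup_bounds: "s0 \<le> Sup Z" "Sup Z \<le> b"
    unfolding Z_def by auto
  have neg_after: "g k r < 0" if "k \<in> I" "r \<in> {Sup Z<..b}" for k r
  proof (rule ccontr)
    assume "\<not> g k r < 0"
    hence "r \<in> Z" unfolding Z_def using that Sup_bounds by (auto intro!: bexI[of _ k])
    hence "r \<le> Sup Z" using \<open>bdd_above Z\<close> by (rule cSup_upper)
    thus False using that by simp
  qed
  have Sup_lt_b: "Sup Z < b" using j end_neg[OF j(1)] Sup_bounds by (cases "Sup Z = b") auto
  have nonpos_at: "g k (Sup Z) \<le> 0" if "k \<in> I" for k
  proof (rule continuous_le_on_closure[where S = "{Sup Z<..b}" and f = "g k"])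
    show "continuous_on (closure {Sup Z<..b}) (g k)"
      using cont[OF that] Sup_bounds s0 Sup_lt_b by (auto intro: continuous_on_subset)
  qed (use Sup_lt_b neg_after[OF that] in \<open>auto intro: less_imp_le\<close>)
  have "Sup Z \<noteq> s0" using nonpos_at[OF i] gi_pos by auto
  hence interior: "Sup Z \<in> {a<..<b}" using Sup_bounds s0 Sup_lt_b by auto
  have gj_zero: "g j (Sup Z) = 0" using nonpos_at[OF j(1)] j(2) by simp
  then obtain D where "D > 0" "(g j has_real_derivative D) (at (Sup Z))"
    using incr_at_max[OF j(1) interior] nonpos_at by auto
  then obtain d where "d > 0" and right_incr: "\<forall>h>0. h < d \<longrightarrow> g j (Sup Z) < g j (Sup Z + h)"
    using DERIV_pos_inc_right by blast
  define h where "h = min (d/2) (b - Sup Z)"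
  have "h > 0" "h < d" "Sup Z + h \<in> {Sup Z<..b}"
    using \<open>d > 0\<close> Sup_lt_b unfolding h_def by auto
  thus False using right_incr gj_zero neg_after[OF j(1)] by force
qed

lemma family_le_final_bound_if_nondecreasing_at_max:
  fixes f :: "'i \<Rightarrow> real \<Rightarrow> real"
  assumes "finite I"
    and cont: "\<And>k. k \<in> I \<Longrightarrow> continuous_on {a..b} (f k)"
    and nondecr_at_max: "\<And>k s. k \<in> I \<Longrightarrow> s \<in> {a<..<b} \<Longrightarrow> (\<forall>l\<in>I. f l s \<le> f k s) \<Longrightarrow>
                 \<exists>D\<ge>0. (f k has_real_derivative D) (at s)"
    and final: "\<And>k. k \<in> I \<Longrightarrow> f k b \<le> M"
    and "i \<in> I" and s0: "s0 \<in> {a..b}"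
  shows "f i s0 \<le> M"
proof (rule field_le_epsilon)
  fix \<epsilon> :: real
  assume "\<epsilon> > 0"
  define \<delta> where "\<delta> = \<epsilon> / (1 + b - s0)"
  have "\<delta> > 0" using \<open>\<epsilon> > 0\<close> s0 unfolding \<delta>_def by simp
  define g where "g k s = f k s - (M + \<delta> * (1 + b - s))" for k s
  have "g i s0 \<le> 0"
  proof (rule family_le_zero_if_increasing_at_max[where g = g and a = a and b = b])
    show "continuous_on {a..b} (g k)" if "k \<in> I" for k
      unfolding g_def using cont[OF that] by (intro continuous_intros)
    show "g k b < 0" if "k \<in> I" for k
      using final[OF that] \<open>\<delta> > 0\<close> unfolding g_def by simp
    fix k s
    assume "k \<in> I" "s \<in> {a<..<b}" "\<forall>l\<in>I. g l s \<le> g k s"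
    then obtain D where "D \<ge> 0" "(f k has_real_derivative D) (at s)"
      using nondecr_at_max unfolding g_def by force
    hence "(g k has_real_derivative D + \<delta>) (at s)"
      unfolding g_def by (auto intro!: derivative_eq_intros)
    thus "\<exists>D>0. (g k has_real_derivative D) (at s)"
      using \<open>D \<ge> 0\<close> \<open>\<delta> > 0\<close> by (intro exI[of _ "D + \<delta>"]) simp
  qed (use assms in auto)
  moreover have "\<delta> * (1 + b - s0) = \<epsilon>" using s0 unfolding \<delta>_def by simp
  ultimately show "f i s0 \<le> M + \<epsilon>" unfolding g_def by simp
qed

lemma repulsive_projection_le_final_max:
  fixes x :: "'i \<Rightarrow> real \<Rightarrow> 'a::real_inner" and psi :: "'a \<Rightarrow> 'a \<Rightarrow> real"
  assumes "finite I"
    and psi_nonneg: "\<And>y z. psi y z \<ge> 0"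
    and alpha_nonpos: "\<And>s. s \<in> {a<..<b} \<Longrightarrow> alpha s \<le> 0"
    and "c \<ge> 0"
    and cont: "\<And>i. i \<in> I \<Longrightarrow> continuous_on {a..b} (x i)"
    and ode: "\<And>i s. i \<in> I \<Longrightarrow> s \<in> {a<..<b} \<Longrightarrow>
        (x i has_vector_derivative
           c *\<^sub>R (\<Sum>j\<in>I - {i}. (alpha s * psi (x i s) (x j s)) *\<^sub>R (x j s - x i s))) (at s)"
    and "i \<in> I" "s \<in> {a..b}"
  shows "x i s \<bullet> v \<le> (MAX j\<in>I. x j b \<bullet> v)"
proof (rule family_le_final_bound_if_nondecreasing_at_max[where f = "\<lambda>k s. x k s \<bullet> v"])
  show "continuous_on {a..b} (\<lambda>s. x k s \<bullet> v)" if "k \<in> I" for k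
    using cont[OF that] by (intro continuous_intros)
  show "x k b \<bullet> v \<le> (MAX j\<in>I. x j b \<bullet> v)" if "k \<in> I" for k
    using \<open>finite I\<close> that by (intro Max_ge) auto
  fix k r
  assume k: "k \<in> I" and r: "r \<in> {a<..<b}" and maximal: "\<forall>l\<in>I. x l r \<bullet> v \<le> x k r \<bullet> v"
  define D where "D = c * (\<Sum>j\<in>I - {k}. (alpha r * psi (x k r) (x j r)) * (x j r \<bullet> v - x k r \<bullet> v))"
  have "((\<lambda>s. x k s \<bullet> v) has_real_derivative D) (at r)"
    using bounded_linear.has_vector_derivative[OF bounded_linear_inner_left ode[OF k r]]
    by (simp add: has_real_derivative_iff_has_vector_derivative D_def
        inner_sum_left inner_diff_left)
  moreover have "D \<ge> 0"
    unfolding D_def using \<open>c \<ge> 0\<close> alpha_nonpos[OF r] psi_nonneg maximal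
    by (intro mult_nonneg_nonneg sum_nonneg mult_nonpos_nonpos mult_nonpos_nonneg) auto
  ultimately show "\<exists>D\<ge>0. ((\<lambda>s. x k s \<bullet> v) has_real_derivative D) (at r)"
    by blast
qed (use assms in auto)

lemma repulsive_projection_between_final_min_max:
  fixes x :: "'i \<Rightarrow> real \<Rightarrow> 'a::real_inner" and psi :: "'a \<Rightarrow> 'a \<Rightarrow> real"
  assumes "finite I"
    and "\<And>y z. psi y z \<ge> 0"
    and "\<And>s. s \<in> {a<..<b} \<Longrightarrow> alpha s \<le> 0"
    and "c \<ge> 0"
    and "\<And>i. i \<in> I \<Longrightarrow> continuous_on {a..b} (x i)"
    and "\<And>i s. i \<in> I \<Longrightarrow> s \<in> {a<..<b} \<Longrightarrow>
        (x i has_vector_derivative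
           c *\<^sub>R (\<Sum>j\<in>I - {i}. (alpha s * psi (x i s) (x j s)) *\<^sub>R (x j s - x i s))) (at s)"
    and i: "i \<in> I" and "s \<in> {a..b}"
  shows "(MIN j\<in>I. x j b \<bullet> v) \<le> x i s \<bullet> v \<and> x i s \<bullet> v \<le> (MAX j\<in>I. x j b \<bullet> v)"
proof
  note upper = repulsive_projection_le_final_max[OF assms]
  show "x i s \<bullet> v \<le> (MAX j\<in>I. x j b \<bullet> v)" by (rule upper)
  have "- (MIN j\<in>I. x j b \<bullet> v) = (MAX j\<in>I. x j b \<bullet> - v)"
    using \<open>finite I\<close> i by (subst minus_Min_eq_Max) (auto simp: image_image)
  also have "\<dots> \<ge> x i s \<bullet> - v" by (rule upper)
  finally show "(MIN j\<in>I. x j b \<bullet> v) \<le> x i s \<bullet> v" by simp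
qed

theorem lemma3p4:
  fixes N :: nat
    and psi :: "'a::euclidean_space \<Rightarrow> 'a \<Rightarrow> real"
    and t :: "nat \<Rightarrow> real"
    and x :: "nat \<Rightarrow> real \<Rightarrow> 'a"
  assumes N2: "N \<ge> 2"
    and psi_pos: "\<And>y z. psi y z > 0"
    and psi_bdd: "bdd_above (range (\<lambda>p. psi (fst p) (snd p)))"
    and psi_cont: "continuous_on UNIV (\<lambda>p. psi (fst p) (snd p))"
    and t_mono: "strict_mono t"
    and t0: "t 0 = 0"
    and t_lim: "filterlim t at_top sequentially"
    and x_cont: "\<And>i. i < N \<Longrightarrow> continuous_on {0..} (x i)"
    and x_ode: "\<And>i n s. i < N \<Longrightarrow> s \<in> {t n<..<t (Suc n)} \<Longrightarrow>
        (x i has_vector_derivative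
           (1 / real (N - 1)) *\<^sub>R
             (\<Sum>j\<in>{..<N} - {i}. (sw_alpha t s * psi (x i s) (x j s)) *\<^sub>R (x j s - x i s))) (at s)"
    and A1: "\<And>n. t (2*n+2) - t (2*n+1) < ln 2 / psiK psi"
    and A2: "summable (\<lambda>p. ln (exp (psiK psi * (t (2*p+2) - t (2*p+1)))
                           / (2 - exp (psiK psi * (t (2*p+2) - t (2*p+1))))))"
    and A3: "filterlim (\<lambda>m. \<Sum>p<m. ln (max (1 - exp (- psiK psi * (t (2*p+1) - t (2*p))))
               (1 - psi0 psi (M0 (psiK psi) t N (\<lambda>i. x i 0)) / psiK psi
                    * (1 - exp (- psiK psi * (t (2*p+1) - t (2*p)))))))
             at_bot sequentially"
  shows "\<forall>v n s i. s \<in> {t (2*n+1)..t (2*n+2)} \<and> i < N \<longrightarrow>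
           (MIN j\<in>{..<N}. x j (t (2*n+2)) \<bullet> v) \<le> x i s \<bullet> v \<and>
           x i s \<bullet> v \<le> (MAX j\<in>{..<N}. x j (t (2*n+2)) \<bullet> v)"
proof (intro allI impI, elim conjE)
  fix v n s i
  assume s: "s \<in> {t (2*n+1)..t (2*n+2)}" and "i < N"
  have t_nonneg: "t m \<ge> 0" for m
    using t0 t_mono by (metis le0 strict_mono_less_eq)
  show "(MIN j\<in>{..<N}. x j (t (2*n+2)) \<bullet> v) \<le> x i s \<bullet> v \<and>
        x i s \<bullet> v \<le> (MAX j\<in>{..<N}. x j (t (2*n+2)) \<bullet> v)"
  proof (rule repulsive_projection_between_final_min_max
      [where I = "{..<N}" and x = x and a = "t (2*n+1)" and b = "t (2*n+2)"
        and alpha = "sw_alpha t" and c = "1 / real (N - 1)" and psi = psi])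
    show "sw_alpha t r \<le> 0" if "r \<in> {t (2*n+1)<..<t (2*n+2)}" for r
      using that unfolding sw_alpha_def by (auto intro!: exI[of _ n])
    show "continuous_on {t (2*n+1)..t (2*n+2)} (x k)" if "k \<in> {..<N}" for k
      using that t_nonneg[of "2*n+1"] by (intro continuous_on_subset[OF x_cont]) auto
    show "(x k has_vector_derivative (1 / real (N - 1)) *\<^sub>R
            (\<Sum>j\<in>{..<N} - {k}. (sw_alpha t r * psi (x k r) (x j r)) *\<^sub>R (x j r - x k r))) (at r)"
      if "k \<in> {..<N}" "r \<in> {t (2*n+1)<..<t (2*n+2)}" for k r
      using x_ode[of k r "2*n+1"] that by simp
    show "psi y z \<ge> 0" for y z
      using psi_pos less_imp_le by blast
  qed (use s \<open>i < N\<close> in simp_all)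
qed

end
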